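(* For every finite set $S$, the monotone map $\eta_S \colon 1 \star S \to [1]^S$ exhibits $[1]^S$ as the free semilattice on the poset $1\star S$. That is, for every semilattice $A$ and every monotone map $f \colon 1 \star S \to A$ (with respect to the order $x\le y \iff x\vee y=y$ on $A$), there is a unique semilattice homomorphism $f^\dagger \colon [1]^S \to A$ such that $f = f^\dagger \circ \eta_S$.
   Context: A (join-)semilattice is a set with an associative, commutative, idempotent binary operation $\vee$; a semilattice homomorphism is a map preserving $\vee$ (no bounds required). Every semilattice is a poset via $x \le y \iff x \vee y = y$. $[1]=\{0<1\}$ is the two-element linear order with $\vee=\max$, and $[1]^S$ carries the pointwise semilattice structure. For a set $S$ (viewed as a discrete poset), $1 \star S$ denotes the poset obtained by adjoining a new minimum element $\bot$ to $S$. The map $\eta_S \colon 1\star S \to [1]^S$ sends $\bot$ to the constant function $0$ and $i \in S$ to the function that is $1$ at $i$ and $0$ elsewhere. *)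

theory Defs
  imports "HOL-Library.FuncSet"
begin

text \<open>The poset 1 * S: carrier None (the new bottom) plus Some i for i in S.\<close>
definition cone :: "'a set \<Rightarrow> 'a option set" where
  "cone S = insert None (Some ` S)"

definition cone_le :: "'a option \<Rightarrow> 'a option \<Rightarrow> bool" where
  "cone_le x y \<longleftrightarrow> x = None \<or> x = y"

text \<open>[1]^S: functions S -> {0<1} (bool, False = 0), represented as
  functions vanishing outside S; the join is pointwise (sup on bool = or).\<close>
definition cube :: "'a set \<Rightarrow> ('a \<Rightarrow> bool) set" where
  "cube S = {g. \<forall>x. x \<notin> S \<longrightarrow> \<not> g x}"

definition eta :: "'a option \<Rightarrow> ('a \<Rightarrow> bool)" where
  "eta x = (case x of None \<Rightarrow> (\<lambda>_. False) | Some i \<Rightarrow> (\<lambda>k. k = i))"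

definition mono_into_sl :: "'a set \<Rightarrow> ('b \<Rightarrow> 'b \<Rightarrow> 'b) \<Rightarrow> ('a option \<Rightarrow> 'b) \<Rightarrow> bool" where
  "mono_into_sl S j f \<longleftrightarrow>
     (\<forall>x\<in>cone S. \<forall>y\<in>cone S. cone_le x y \<longrightarrow> j (f x) (f y) = f y)"

definition sl_hom_on :: "('c::sup) set \<Rightarrow> ('b \<Rightarrow> 'b \<Rightarrow> 'b) \<Rightarrow> ('c \<Rightarrow> 'b) \<Rightarrow> bool" where
  "sl_hom_on P j h \<longleftrightarrow> (\<forall>g\<in>P. \<forall>g'\<in>P. h (sup g g') = j (h g) (h g'))"

end

theory Submission
  imports Defs
begin

text \<open>An element g of the cube is the characteristic function of the finite set
  A = {k. g k} \<subseteq> S, and it is the join of the generators eta x for x \<in> cone A.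
  Hence a homomorphism extending f must send g to the finite join of f over cone A,
  and conversely this formula defines a homomorphism because cone (A \<union> B) =
  cone A \<union> cone B. Monotonicity of f is needed only to see that this
  extension agrees with f at eta (Some a), the join of f None and f (Some a).\<close>

lemma finite_cone [simp]: "finite S \<Longrightarrow> finite (cone S)"
  by (simp add: cone_def)

lemma cone_ne_empty [simp]: "cone S \<noteq> {}"
  by (simp add: cone_def)

lemma cone_Un: "cone (A \<union> B) = cone A \<union> cone B"
  by (auto simp: cone_def)

lemma cone_mono: "A \<subseteq> B \<Longrightarrow> cone A \<subseteq> cone B"
  by (auto simp: cone_def)

lemma Collect_in_cube: "g \<in> cube S \<Longrightarrow> Collect g \<subseteq> S"
  by (auto simp: cube_def)

lemma sup_in_cube: "g \<in> cube S \<Longrightarrow> g' \<in> cube S \<Longrightarrow> sup g g' \<in> cube S"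
  by (auto simp: cube_def)

lemma eta_in_cube: "x \<in> cone S \<Longrightarrow> eta x \<in> cube S"
  by (auto simp: eta_def cone_def cube_def)

lemma Sup_fin_eta_cone:
  assumes "finite A"
  shows "Sup_fin (eta ` cone A) = (\<lambda>k. k \<in> A)"
  using assms by (simp add: Sup_fin_Sup fun_eq_iff cone_def eta_def)

lemma Sup_fin_in_sup_closed:
  fixes X :: "'c::lattice set"
  assumes "\<And>x y. x \<in> P \<Longrightarrow> y \<in> P \<Longrightarrow> sup x y \<in> P"
    and "finite X" "X \<noteq> {}" "X \<subseteq> P"
  shows "Sup_fin X \<in> P"
  using assms(2-4) by (induction X rule: finite_ne_induct) (simp_all add: assms(1))

lemma sl_hom_on_Sup_fin:
  fixes X :: "'c::lattice set"
  assumes "semilattice j" "sl_hom_on P j h"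
    and sup_closed: "\<And>x y. x \<in> P \<Longrightarrow> y \<in> P \<Longrightarrow> sup x y \<in> P"
    and "finite X" "X \<noteq> {}" "X \<subseteq> P"
  shows "h (Sup_fin X) = semilattice_set.F j (h ` X)"
proof -
  interpret semilattice_set j by (rule semilattice_set.intro) fact
  show ?thesis
    using assms(4-6)
  proof (induction X rule: finite_ne_induct)
    case (insert x X)
    have "Sup_fin X \<in> P"
      by (rule Sup_fin_in_sup_closed[OF sup_closed]) (use insert in auto)
    with insert assms(2) show ?case
      by (simp add: sl_hom_on_def)
  qed simp
qed

definition cube_ext :: "'a set \<Rightarrow> ('b \<Rightarrow> 'b \<Rightarrow> 'b) \<Rightarrow> ('a option \<Rightarrow> 'b) \<Rightarrow> ('a \<Rightarrow> bool) \<Rightarrow> 'b"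
  where "cube_ext S j f = restrict (\<lambda>g. semilattice_set.F j (f ` cone (Collect g))) (cube S)"

lemma cube_ext_extensional: "cube_ext S j f \<in> extensional (cube S)"
  by (simp add: cube_ext_def)

lemma sl_hom_on_cube_ext:
  assumes "finite S" "semilattice j"
  shows "sl_hom_on (cube S) j (cube_ext S j f)"
  unfolding sl_hom_on_def
proof (intro ballI)
  interpret semilattice_set j by (rule semilattice_set.intro) fact
  fix g g' assume g: "g \<in> cube S" and g': "g' \<in> cube S"
  have fin: "finite (Collect g)" "finite (Collect g')"
    using g g' assms(1) by (auto dest: Collect_in_cube intro: finite_subset)
  have "Collect (sup g g') = Collect g \<union> Collect g'"
    by auto
  then have "f ` cone (Collect (sup g g')) = f ` cone (Collect g) \<union> f ` cone (Collect g')"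
    by (simp add: cone_Un image_Un)
  then show "cube_ext S j f (sup g g') = j (cube_ext S j f g) (cube_ext S j f g')"
    using g g' sup_in_cube[OF g g'] fin by (simp add: cube_ext_def union)
qed

lemma cube_ext_eta:
  assumes "semilattice j" "mono_into_sl S j f" "x \<in> cone S"
  shows "cube_ext S j f (eta x) = f x"
proof -
  interpret semilattice_set j by (rule semilattice_set.intro) fact
  show ?thesis
  proof (cases x)
    case None
    then show ?thesis
      using eta_in_cube[OF assms(3)] by (simp add: cube_ext_def eta_def cone_def)
  next
    case (Some a)
    with assms(3) have "a \<in> S"
      by (auto simp: cone_def)
    with assms(2) have "j (f None) (f (Some a)) = f (Some a)"
      by (auto simp: mono_into_sl_def cone_def cone_le_def)
    with Some show ?thesis
      using eta_in_cube[OF assms(3)] by (simp add: cube_ext_def eta_def cone_def)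
  qed
qed

lemma sl_hom_on_cube_eq_cube_ext:
  assumes "finite S" "semilattice j" "sl_hom_on (cube S) j h"
    and h_eta: "\<forall>x\<in>cone S. f x = h (eta x)"
    and g: "g \<in> cube S"
  shows "h g = cube_ext S j f g"
proof -
  let ?A = "Collect g"
  have A: "?A \<subseteq> S" "finite ?A"
    using g assms(1) by (auto dest: Collect_in_cube intro: finite_subset)
  have gens: "eta ` cone ?A \<subseteq> cube S"
    using cone_mono[OF A(1)] by (auto intro: eta_in_cube)
  have "h g = h (Sup_fin (eta ` cone ?A))"
    using Sup_fin_eta_cone[OF A(2)] by simp
  also have "\<dots> = semilattice_set.F j (h ` eta ` cone ?A)"
    using A(2) gens by (intro sl_hom_on_Sup_fin[OF assms(2,3)] sup_in_cube) auto
  also have "h ` eta ` cone ?A = f ` cone ?A"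
    using h_eta cone_mono[OF A(1)] by (force simp: image_image)
  finally show ?thesis
    using g by (simp add: cube_ext_def)
qed

theorem mainTheorem1:
  fixes S :: "'a set" and j :: "'b \<Rightarrow> 'b \<Rightarrow> 'b" and f :: "'a option \<Rightarrow> 'b"
  assumes "finite S"
    and "semilattice j"
    and "mono_into_sl S j f"
  shows "\<exists>!h. h \<in> extensional (cube S) \<and> sl_hom_on (cube S) j h
              \<and> (\<forall>x\<in>cone S. f x = h (eta x))"
proof (rule ex1I[of _ "cube_ext S j f"])
  show "cube_ext S j f \<in> extensional (cube S) \<and> sl_hom_on (cube S) j (cube_ext S j f)
        \<and> (\<forall>x\<in>cone S. f x = cube_ext S j f (eta x))"
    using assms by (simp add: cube_ext_extensional sl_hom_on_cube_ext cube_ext_eta)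
next
  fix h
  assume "h \<in> extensional (cube S) \<and> sl_hom_on (cube S) j h \<and> (\<forall>x\<in>cone S. f x = h (eta x))"
  then show "h = cube_ext S j f"
    using assms(1,2) sl_hom_on_cube_eq_cube_ext cube_ext_extensional
    by (intro extensionalityI) blast+
qed

end
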